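(* Suppose $\mathcal F\subset\binom{[n]}{4}$ satisfies $\gamma_3(\mathcal F)\geq 3$ and $|F\cap F'|=1$ for all distinct $F,F'\in\mathcal F$. Then $\mathcal F$ is isomorphic to $\mathcal L_3$.
   Context: For $S\subset[n]$, $\mathcal F(\overline S)=\{F\in\mathcal F: F\cap S=\emptyset\}$, and $\gamma_3(\mathcal F)=\min_{S\in\binom{[n]}{3}}|\mathcal F(\overline S)|$. $\mathcal L_3$ is the family of lines of the projective plane of order 3: on the vertex set $\mathbb Z_{13}$, $\mathcal L_3=\{\{i,i+1,i+3,i+9\}: i\in\mathbb Z_{13}\}$ (addition modulo 13). Isomorphic means equal up to an injective relabeling of vertices. *)

theory Defs
  imports Main
begin

definition avoid :: "nat set set \<Rightarrow> nat set \<Rightarrow> nat set set" where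
  "avoid F S = {A \<in> F. A \<inter> S = {}}"

definition gamma3 :: "nat \<Rightarrow> nat set set \<Rightarrow> nat" where
  "gamma3 n F = Min {card (avoid F S) | S. S \<subseteq> {1..n} \<and> card S = 3}"

text \<open>Lines of the projective plane of order 3 on Z_13 = {0..12}.\<close>
definition L3 :: "nat set set" where
  "L3 = {{i, (i+1) mod 13, (i+3) mod 13, (i+9) mod 13} | i. i < 13}"

definition isomorphic :: "'a set set \<Rightarrow> 'b set set \<Rightarrow> bool" where
  "isomorphic F G = (\<exists>\<phi>. inj_on \<phi> (\<Union>F) \<and> (\<lambda>A. \<phi> ` A) ` F = G)"

end

theory Submission
  imports Defs
begin

text \<open>
  Let x lie on a member L. A member avoiding the three other points of L meets L in x, so the
  hypothesis on gamma3 puts x on at least four members. These meet any member not through x in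
  four distinct points, hence cover it: any two points lie on a common member, and F is a
  projective plane of order 3.

  Fix a point v, four lines A, B, C, D through it, a point a0 on A and the three transversals
  from a0 to the points b0, b1, b2 of B; they meet C and D in c0, c1, c2 and d0, d1, d2. Let the
  line through b0 and c1 meet A in a1 and call a2 the last point of A. Labelling these 13 points
  by the elements of Z13 makes seven lines of F lines of L3 and puts a1, b0, c1 on an eighth.
  Every further line is now forced: a point can be excluded from it as soon as a known line
  meets it in another point, and for five suitable pairs of points only four points survive.
\<close>

lemma gamma3_le_card_avoid:
  assumes "S \<subseteq> {1..n}" "card S = 3"
  shows "gamma3 n F \<le> card (avoid F S)"
proof -
  have "finite {card (avoid F S) | S. S \<subseteq> {1..n} \<and> card S = 3}"
    by (rule finite_subset[of _ "(\<lambda>S. card (avoid F S)) ` Pow {1..n}"]) auto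
  with assms show ?thesis
    unfolding gamma3_def by (auto intro: Min_le)
qed

lemma isomorphic_image:
  assumes "inj_on p (\<Union>G)"
  shows "isomorphic ((`) p ` G) G"
  unfolding isomorphic_def
proof (intro exI conjI)
  show "inj_on (inv_into (\<Union>G) p) (\<Union>((`) p ` G))"
    by (rule inj_on_inv_into) blast
  have "inv_into (\<Union>G) p ` p ` A = A" if "A \<in> G" for A
    using assms that by (intro inv_into_image_cancel) auto
  then show "(\<lambda>A. inv_into (\<Union>G) p ` A) ` (`) p ` G = G"
    by (simp add: image_image)
qed

lemma lessThan_13: "{..<13::nat} = {0, 1, 2, 3, 4, 5, 6, 7, 8, 9, 10, 11, 12}"
  by (auto simp: numeral_eq_Suc less_Suc_eq)

lemma L3_eq:
  "L3 = {{0, 1, 3, 9}, {1, 2, 4, 10}, {2, 3, 5, 11}, {3, 4, 6, 12}, {0, 4, 5, 7}, {1, 5, 6, 8},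
    {2, 6, 7, 9}, {3, 7, 8, 10}, {4, 8, 9, 11}, {5, 9, 10, 12}, {0, 6, 10, 11}, {1, 7, 11, 12},
    {0, 2, 8, 12}}"
proof -
  have "L3 = (\<lambda>i. {i, (i + 1) mod 13, (i + 3) mod 13, (i + 9) mod 13}) ` {..<13}"
    unfolding L3_def by auto
  then show ?thesis
    unfolding lessThan_13 by (simp add: insert_commute numeral_2_eq_2)
qed

lemma Union_L3: "\<Union>L3 = {..<13}"
  unfolding L3_eq lessThan_13 by auto

lemma L3_join: "a < 13 \<Longrightarrow> b < 13 \<Longrightarrow> \<exists>U\<in>L3. a \<in> U \<and> b \<in> U"
  unfolding L3_eq by (simp add: numeral_eq_Suc less_Suc_eq) (elim disjE; simp)

text \<open>The four lines of L3 through 3 and the three other lines through 0.\<close>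

definition L3_frame :: "nat set set" where
  "L3_frame = {{0, 1, 3, 9}, {2, 3, 5, 11}, {3, 4, 6, 12}, {3, 7, 8, 10},
    {0, 2, 8, 12}, {0, 4, 5, 7}, {0, 6, 10, 11}}"

text \<open>
  If excluded K T z, the label z is off every line containing the points labelled by T: such a
  line would share two points with U, hence equal U, which misses a point of T.
\<close>

definition excluded :: "nat set set \<Rightarrow> nat set \<Rightarrow> nat \<Rightarrow> bool" where
  "excluded K T z \<longleftrightarrow> (\<exists>U\<in>K. z \<in> U \<and> (\<exists>t\<in>T. t \<in> U \<and> t \<noteq> z) \<and> (\<exists>s\<in>T. s \<notin> U))"

locale lines4 =
  fixes F :: "'a set set"
  assumes card_line: "L \<in> F \<Longrightarrow> card L = 4"
    and card_Int_lines: "L \<in> F \<Longrightarrow> M \<in> F \<Longrightarrow> L \<noteq> M \<Longrightarrow> card (L \<inter> M) = 1"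
begin

lemma finite_line: "L \<in> F \<Longrightarrow> finite L"
  using card_line by (metis card.infinite zero_neq_numeral)

lemma Int_lines_singleton: "L \<in> F \<Longrightarrow> M \<in> F \<Longrightarrow> L \<noteq> M \<Longrightarrow> \<exists>z. L \<inter> M = {z}"
  using card_Int_lines by (metis One_nat_def card_1_singletonE)

lemma line_eqI:
  assumes "L \<in> F" "M \<in> F" "x \<in> L" "y \<in> L" "x \<in> M" "y \<in> M" "x \<noteq> y"
  shows "L = M"
proof (rule ccontr)
  assume "L \<noteq> M"
  then obtain z where "L \<inter> M = {z}"
    using Int_lines_singleton assms(1,2) by blast
  then have "x = z" "y = z"
    using assms(3-6) by blast+
  with assms(7) show False
    by simp
qed

lemma line_eq_four_points:
  assumes "L \<in> F" "{a, b, c, d} \<subseteq> L" "distinct [a, b, c, d]"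
  shows "L = {a, b, c, d}"
proof (rule card_seteq[symmetric])
  show "finite L"
    using assms(1) by (rule finite_line)
  show "card L \<le> card {a, b, c, d}"
    using assms(3) card_line[OF assms(1)] by simp
qed (fact assms(2))

lemma obtain_line_points:
  assumes "L \<in> F" "v \<in> L"
  obtains x y z where "L = {v, x, y, z}" "distinct [v, x, y, z]"
proof -
  have "card (L - {v}) = 3"
    using assms card_line[OF assms(1)] by (simp add: finite_line)
  then obtain x y z where xyz: "L - {v} = {x, y, z}" "x \<noteq> y" "x \<noteq> z" "y \<noteq> z"
    unfolding card_3_iff by blast
  show thesis
  proof (rule that)
    show "L = {v, x, y, z}"
      using assms(2) xyz(1) by blast
    show "distinct [v, x, y, z]"
      using xyz by auto
  qed
qed

lemma obtain_fourth_point: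
  assumes "L \<in> F" "{x, y, z} \<subseteq> L" "distinct [x, y, z]"
  obtains w where "L = {x, y, z, w}" "distinct [x, y, z, w]"
proof -
  have "card (L - {x, y, z}) = 1"
    using assms card_line[OF assms(1)] by (simp add: card_Diff_subset finite_line)
  then obtain w where w: "L - {x, y, z} = {w}"
    using card_1_singletonE by blast
  have "L = {x, y, z} \<union> (L - {x, y, z})"
    using assms(2) by blast
  also have "\<dots> = {x, y, z, w}"
    using w by auto
  finally show thesis
    using that w assms(3) by auto
qed

lemma pencil_disjoint:
  assumes "L \<in> F" "M \<in> F" "L \<noteq> M" "v \<in> L" "v \<in> M"
  shows "(L - {v}) \<inter> (M - {v}) = {}"
proof -
  obtain z where z: "L \<inter> M = {z}"
    using Int_lines_singleton assms(1-3) by blast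
  moreover have "z = v"
    using z assms(4,5) by (metis IntI singletonD)
  ultimately show ?thesis
    by auto
qed

lemma off_center_neq:
  assumes "L \<in> F" "M \<in> F" "L \<noteq> M" "v \<in> L" "v \<in> M" "x \<in> L" "y \<in> M" "x \<noteq> v"
  shows "x \<noteq> y"
  using pencil_disjoint[OF assms(1-5)] assms(6-8) by auto

lemma lines_avoiding_line_minus_point:
  assumes "L \<in> F" "x \<in> L"
  shows "{M \<in> F. M \<inter> (L - {x}) = {}} = {M \<in> F. x \<in> M \<and> M \<noteq> L}"
proof -
  obtain a b c where L: "L = {x, a, b, c}" "distinct [x, a, b, c]"
    using obtain_line_points assms by blast
  have "M \<inter> (L - {x}) = {} \<longleftrightarrow> x \<in> M" if M: "M \<in> F" "M \<noteq> L" for M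
  proof -
    obtain z where "M \<inter> L = {z}"
      using Int_lines_singleton M assms(1) by blast
    then have "z \<in> M" "z \<in> L" "\<And>w. w \<in> M \<Longrightarrow> w \<in> L \<Longrightarrow> w = z"
      by auto
    then show ?thesis
      using assms(2) by auto
  qed
  moreover have "L \<inter> (L - {x}) \<noteq> {}"
    using L by auto
  ultimately show ?thesis
    by blast
qed

lemma join_if_large_pencils:
  assumes pencil: "\<And>L x. L \<in> F \<Longrightarrow> x \<in> L \<Longrightarrow> 4 \<le> card {M \<in> F. x \<in> M}"
    and "A \<in> F" "x \<in> A" "C \<in> F" "y \<in> C"
  shows "\<exists>L\<in>F. x \<in> L \<and> y \<in> L"
proof (cases "x \<in> C")
  case True
  with assms(4,5) show ?thesis by blast
next
  case False
  let ?P = "{M \<in> F. x \<in> M}"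
  define f where "f M = the_elem (M \<inter> C)" for M
  have f: "M \<inter> C = {f M}" if M: "M \<in> ?P" for M
  proof -
    have "M \<noteq> C"
      using M False by blast
    then obtain z where "M \<inter> C = {z}"
      using Int_lines_singleton M assms(4) by blast
    then show ?thesis
      by (simp add: f_def)
  qed
  have "inj_on f ?P"
  proof (rule inj_onI)
    fix M M' assume M: "M \<in> ?P" "M' \<in> ?P" "f M = f M'"
    have "f M \<in> C" "f M \<in> M" "f M' \<in> M'"
      using f[OF M(1)] f[OF M(2)] by auto
    with M False show "M = M'"
      by (intro line_eqI[of M M' x "f M"]) auto
  qed
  moreover have "4 \<le> card ?P"
    using pencil assms(2,3) by blast
  ultimately have "card C \<le> card (f ` ?P)"
    using card_line[OF assms(4)] by (simp add: card_image)
  moreover have "f ` ?P \<subseteq> C"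
    using f by blast
  ultimately have "f ` ?P = C"
    by (intro card_seteq[OF finite_line[OF assms(4)]])
  with assms(5) obtain M where "M \<in> ?P" "y = f M"
    by blast
  with f show ?thesis
    by auto
qed

lemma eq_image_if_excluded:
  assumes inj: "inj_on p V" and K: "\<Union>K \<subseteq> V" "(`) p ` K \<subseteq> F"
    and cover: "\<Union>F \<subseteq> p ` V"
    and M: "M \<in> F" "p ` T \<subseteq> M" and S: "T \<subseteq> S" "S \<subseteq> V" "card S = 4"
    and excl: "\<forall>z \<in> V. z \<notin> S \<longrightarrow> excluded K T z"
  shows "M = p ` S"
proof -
  have "M \<subseteq> p ` S"
  proof
    fix x assume "x \<in> M"
    then obtain z where z: "z \<in> V" "x = p z"
      using cover M(1) by blast
    show "x \<in> p ` S"
    proof (rule ccontr)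
      assume "x \<notin> p ` S"
      then have "z \<notin> S"
        using z(2) by (metis imageI)
      with z(1) excl obtain U t s
        where U: "U \<in> K" "z \<in> U" "t \<in> T" "t \<in> U" "t \<noteq> z" "s \<in> T" "s \<notin> U"
        unfolding excluded_def by blast
      have "U \<subseteq> V" "t \<in> V" "s \<in> V"
        using K(1) S U by blast+
      have "p ` U = M"
      proof (rule line_eqI)
        show "p ` U \<in> F"
          using K(2) U(1) by blast
        show "p t \<noteq> p z"
          using inj U(5) \<open>t \<in> V\<close> z(1) by (meson inj_onD)
      qed (use M U z \<open>x \<in> M\<close> in auto)
      then have "p s \<in> p ` U"
        using M(2) U(6) by blast
      then show False
        using inj_on_image_mem_iff[OF inj \<open>s \<in> V\<close> \<open>U \<subseteq> V\<close>] U(7) by blast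
    qed
  qed
  moreover have "card (p ` S) = 4"
    using S(2,3) card_image inj inj_on_subset by metis
  ultimately show ?thesis
    using card_line[OF M(1)] by (intro card_seteq) (auto intro!: card_ge_0_finite)
qed

end

locale plane4 = lines4 +
  assumes join: "x \<in> \<Union>F \<Longrightarrow> y \<in> \<Union>F \<Longrightarrow> \<exists>L\<in>F. x \<in> L \<and> y \<in> L"

lemma (in lines4) plane4_if_three_more_lines:
  assumes "\<And>L x. L \<in> F \<Longrightarrow> x \<in> L \<Longrightarrow> 3 \<le> card {M \<in> F. x \<in> M \<and> M \<noteq> L}"
  shows "plane4 F"
proof (intro plane4.intro lines4_axioms plane4_axioms.intro)
  have pencil: "4 \<le> card {M \<in> F. x \<in> M}" if "L \<in> F" "x \<in> L" for L x
  proof -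
    have "{M \<in> F. x \<in> M} = insert L {M \<in> F. x \<in> M \<and> M \<noteq> L}"
      using that by auto
    with assms[OF that] show ?thesis
      by (simp add: card_insert_if card_ge_0_finite)
  qed
  fix x y assume "x \<in> \<Union>F" "y \<in> \<Union>F"
  then obtain A C where "A \<in> F" "x \<in> A" "C \<in> F" "y \<in> C"
    by blast
  then show "\<exists>L\<in>F. x \<in> L \<and> y \<in> L"
    using join_if_large_pencils[of A x C y] pencil by blast
qed

context plane4
begin

lemma Union_subset_if_pencil_subset:
  assumes "Q \<in> F" "v \<notin> Q" "\<And>q. q \<in> Q \<Longrightarrow> \<exists>L\<in>F. v \<in> L \<and> q \<in> L \<and> L \<subseteq> X"
  shows "\<Union>F \<subseteq> X"
proof
  have "Q \<noteq> {}"
    using card_line[OF assms(1)] by auto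
  then obtain q where "q \<in> Q"
    by blast
  then obtain L where L: "L \<in> F" "v \<in> L" "L \<subseteq> X"
    using assms(3) by blast
  fix x assume "x \<in> \<Union>F"
  moreover have "v \<in> \<Union>F"
    using L by blast
  ultimately obtain N where N: "N \<in> F" "v \<in> N" "x \<in> N"
    using join by blast
  then obtain q where q: "N \<inter> Q = {q}"
    using Int_lines_singleton assms(1,2) by blast
  then obtain L' where L': "L' \<in> F" "v \<in> L'" "q \<in> L'" "L' \<subseteq> X"
    using assms(3) by blast
  have "v \<noteq> q"
    using q assms(2) by auto
  then have "N = L'"
    using q N L' by (intro line_eqI[of N L' v q]) auto
  with N L' show "x \<in> X"
    by auto
qed

lemma image_mem_if_excluded:
  assumes "inj_on p V" "\<Union>K \<subseteq> V" "(`) p ` K \<subseteq> F" "\<Union>F \<subseteq> p ` V"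
    and "a \<in> \<Union>K" "b \<in> \<Union>K" "{a, b} \<subseteq> S" "S \<subseteq> V" "card S = 4"
    and "\<forall>z \<in> V. z \<notin> S \<longrightarrow> excluded K {a, b} z"
  shows "p ` S \<in> F"
proof -
  have "p a \<in> \<Union>F" "p b \<in> \<Union>F"
    using assms(3,5,6) by blast+
  then obtain M where M: "M \<in> F" "p ` {a, b} \<subseteq> M"
    using join by blast
  have "M = p ` S"
    by (rule eq_image_if_excluded[OF assms(1-4) M assms(7-10)])
  with M(1) show ?thesis
    by simp
qed

lemma Union_subset_image_L3_frame:
  assumes inj: "inj_on p {..<13}" and frame: "(`) p ` L3_frame \<subseteq> F"
  shows "\<Union>F \<subseteq> p ` {..<13}"
proof (rule Union_subset_if_pencil_subset[of "p ` {0, 2, 8, 12}" "p 3"])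
  have lines: "p ` {0, 1, 3, 9} \<in> F" "p ` {2, 3, 5, 11} \<in> F" "p ` {3, 7, 8, 10} \<in> F"
    "p ` {3, 4, 6, 12} \<in> F" "p ` {0, 2, 8, 12} \<in> F"
    using frame by (simp_all add: L3_frame_def)
  then show "p ` {0, 2, 8, 12} \<in> F"
    by blast
  show "p 3 \<notin> p ` {0, 2, 8, 12}"
  proof
    assume "p 3 \<in> p ` {0, 2, 8, 12}"
    then obtain k where k: "k \<in> {0, 2, 8, 12}" "p 3 = p k"
      by blast
    then have "3 = k"
      using inj_onD[OF inj k(2)] k(1) by auto
    with k(1) show False
      by simp
  qed
  fix q assume "q \<in> p ` {0, 2, 8, 12}"
  then consider "q = p 0" | "q = p 2" | "q = p 8" | "q = p 12"
    by blast
  then show "\<exists>L\<in>F. p 3 \<in> L \<and> q \<in> L \<and> L \<subseteq> p ` {..<13}"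
  proof cases
    case 1
    with lines(1) show ?thesis by (intro bexI[OF _ lines(1)]) auto
  next
    case 2
    with lines(2) show ?thesis by (intro bexI[OF _ lines(2)]) auto
  next
    case 3
    with lines(3) show ?thesis by (intro bexI[OF _ lines(3)]) auto
  next
    case 4
    with lines(4) show ?thesis by (intro bexI[OF _ lines(4)]) auto
  qed
qed

lemma image_L3_subset:
  assumes inj: "inj_on p {..<13}" and frame: "(`) p ` L3_frame \<subseteq> F"
    and M: "M \<in> F" "p ` {1, 2, 4} \<subseteq> M"
  shows "(`) p ` L3 \<subseteq> F"
proof -
  note cover = Union_subset_image_L3_frame[OF inj frame]
  have K0: "\<Union>L3_frame \<subseteq> {..<13}"
    by (auto simp: L3_frame_def)
  have "M = p ` {1, 2, 4, 10}"
    by (rule eq_image_if_excluded[OF inj K0 frame cover M])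
      (simp_all add: L3_frame_def excluded_def lessThan_13)
  with M(1) have L1: "p ` {1, 2, 4, 10} \<in> F"
    by simp
  note determine = image_mem_if_excluded[OF inj _ _ cover]
  have L6: "p ` {2, 6, 7, 9} \<in> F"
    by (rule determine[of "L3_frame \<union> {{1, 2, 4, 10}}" 2 6])
      (use frame L1 in \<open>simp_all add: L3_frame_def excluded_def lessThan_13\<close>)
  have L5: "p ` {1, 5, 6, 8} \<in> F"
    by (rule determine[of "L3_frame \<union> {{1, 2, 4, 10}, {2, 6, 7, 9}}" 1 6])
      (use frame L1 L6 in \<open>simp_all add: L3_frame_def excluded_def lessThan_13\<close>)
  have L8: "p ` {4, 8, 9, 11} \<in> F"
    by (rule determine[of "L3_frame \<union> {{1, 2, 4, 10}, {2, 6, 7, 9}, {1, 5, 6, 8}}" 4 8])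
      (use frame L1 L6 L5 in \<open>simp_all add: L3_frame_def excluded_def lessThan_13\<close>)
  have L9: "p ` {5, 9, 10, 12} \<in> F"
    by (rule determine[of "L3_frame \<union> {{1, 2, 4, 10}, {2, 6, 7, 9}, {1, 5, 6, 8}, {4, 8, 9, 11}}" 5 9])
      (use frame L1 L6 L5 L8 in \<open>simp_all add: L3_frame_def excluded_def lessThan_13\<close>)
  have L11: "p ` {1, 7, 11, 12} \<in> F"
    by (rule determine[of "L3_frame \<union> {{1, 2, 4, 10}, {2, 6, 7, 9}, {1, 5, 6, 8}, {4, 8, 9, 11},
        {5, 9, 10, 12}}" 1 7])
      (use frame L1 L6 L5 L8 L9 in \<open>simp_all add: L3_frame_def excluded_def lessThan_13\<close>)
  show ?thesis
    using frame L1 L6 L5 L8 L9 L11 by (simp add: L3_eq L3_frame_def)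
qed

lemma eq_image_L3:
  assumes inj: "inj_on p {..<13}" and frame: "(`) p ` L3_frame \<subseteq> F"
    and M: "M \<in> F" "p ` {1, 2, 4} \<subseteq> M"
  shows "F = (`) p ` L3"
proof
  note lines = image_L3_subset[OF assms]
  show "F \<subseteq> (`) p ` L3"
  proof
    fix L assume L: "L \<in> F"
    obtain v where "v \<in> L"
      using card_line[OF L] by fastforce
    then obtain x y z where "L = {v, x, y, z}" "distinct [v, x, y, z]"
      by (rule obtain_line_points[OF L])
    then have vx: "v \<in> L" "x \<in> L" "v \<noteq> x"
      by auto
    then have "v \<in> p ` {..<13}" "x \<in> p ` {..<13}"
      using Union_subset_image_L3_frame[OF inj frame] L by blast+
    then obtain a b where ab: "a < 13" "b < 13" "v = p a" "x = p b"
      by blast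
    then obtain U where U: "U \<in> L3" "a \<in> U" "b \<in> U"
      using L3_join by blast
    have "L = p ` U"
      using L lines vx ab U by (intro line_eqI[of L "p ` U" v x]) auto
    with U(1) show "L \<in> (`) p ` L3"
      by blast
  qed
qed (rule image_L3_subset[OF assms])

lemma transversal:
  assumes lines: "A \<in> F" "B \<in> F" "C \<in> F" "D \<in> F" "distinct [A, B, C, D]"
    and center: "v \<in> A" "v \<in> B" "v \<in> C" "v \<in> D"
    and ab: "a \<in> A" "a \<noteq> v" "b \<in> B" "b \<noteq> v"
  obtains c d where "{a, b, c, d} \<in> F" "c \<in> C" "c \<noteq> v" "d \<in> D" "d \<noteq> v"
proof -
  have "a \<in> \<Union>F" "b \<in> \<Union>F"
    using lines ab by blast+
  then obtain T where T: "T \<in> F" "a \<in> T" "b \<in> T"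
    using join by blast
  have ab_neq: "a \<noteq> b"
    using off_center_neq[of A B v a b] lines center ab by auto
  have "v \<notin> T"
  proof
    assume "v \<in> T"
    then have "T = A"
      using T lines center ab by (intro line_eqI[of T A v a]) auto
    then show False
      using off_center_neq[of A B v b b] lines center ab T by auto
  qed
  then obtain c d where c: "T \<inter> C = {c}" and d: "T \<inter> D = {d}"
    using Int_lines_singleton[OF T(1)] lines(3,4) center(3,4) by metis
  have cd: "c \<in> C" "c \<noteq> v" "d \<in> D" "d \<noteq> v" "c \<in> T" "d \<in> T"
    using c d \<open>v \<notin> T\<close> by auto
  have "distinct [a, b, c, d]"
    using ab_neq cd off_center_neq[of A C v a c] off_center_neq[of A D v a d]
      off_center_neq[of B C v b c] off_center_neq[of B D v b d] off_center_neq[of C D v c d]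
      lines center ab by auto
  then have "T = {a, b, c, d}"
    using T cd by (intro line_eq_four_points) auto
  with T cd show thesis
    using that by blast
qed

lemma transversals_differ:
  assumes lines: "A \<in> F" "B \<in> F" "C \<in> F" "D \<in> F" "distinct [A, B, C, D]"
    and center: "v \<in> A" "v \<in> B" "v \<in> C" "v \<in> D"
    and T: "{a, b, c, d} \<in> F" "{a, b', c', d'} \<in> F"
    and pts: "a \<in> A - {v}" "b \<in> B - {v}" "b' \<in> B - {v}" "c \<in> C - {v}" "d \<in> D - {v}" "b \<noteq> b'"
  shows "c \<noteq> c'" "d \<noteq> d'"
proof -
  have b': "b' \<notin> {a, b, c, d}"
    using off_center_neq[of A B v a b'] off_center_neq[of B C v b' c] off_center_neq[of B D v b' d]
      lines center pts by auto
  show "c \<noteq> c'"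
  proof
    assume "c = c'"
    then have "{a, b, c, d} = {a, b', c', d'}"
      using T pts off_center_neq[of A C v a c] lines center
      by (intro line_eqI[of _ _ a c]) auto
    with b' show False
      by blast
  qed
  show "d \<noteq> d'"
  proof
    assume "d = d'"
    then have "{a, b, c, d} = {a, b', c', d'}"
      using T pts off_center_neq[of A D v a d] lines center
      by (intro line_eqI[of _ _ a d]) auto
    with b' show False
      by blast
  qed
qed

lemma transversals_from_point:
  assumes lines: "A \<in> F" "B \<in> F" "C \<in> F" "D \<in> F" "distinct [A, B, C, D]"
    and center: "v \<in> A" "v \<in> B" "v \<in> C" "v \<in> D"
    and a0: "a0 \<in> A - {v}" and B: "B = {v, b0, b1, b2}" "distinct [v, b0, b1, b2]"
  obtains c0 c1 c2 d0 d1 d2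
  where "{a0, b0, c0, d0} \<in> F" "{a0, b1, c1, d1} \<in> F" "{a0, b2, c2, d2} \<in> F"
    "C = {v, c0, c1, c2}" "distinct [v, c0, c1, c2]" "D = {v, d0, d1, d2}" "distinct [v, d0, d1, d2]"
proof -
  note setting = lines center
  have b: "b0 \<in> B - {v}" "b1 \<in> B - {v}" "b2 \<in> B - {v}"
    using B by auto
  obtain c0 d0 where T0: "{a0, b0, c0, d0} \<in> F" "c0 \<in> C - {v}" "d0 \<in> D - {v}"
    by (rule transversal[OF setting, of a0 b0]) (use a0 b in auto)
  obtain c1 d1 where T1: "{a0, b1, c1, d1} \<in> F" "c1 \<in> C - {v}" "d1 \<in> D - {v}"
    by (rule transversal[OF setting, of a0 b1]) (use a0 b in auto)
  obtain c2 d2 where T2: "{a0, b2, c2, d2} \<in> F" "c2 \<in> C - {v}" "d2 \<in> D - {v}"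
    by (rule transversal[OF setting, of a0 b2]) (use a0 b in auto)
  have "c0 \<noteq> c1" "d0 \<noteq> d1" "c0 \<noteq> c2" "d0 \<noteq> d2" "c1 \<noteq> c2" "d1 \<noteq> d2"
    using transversals_differ[OF setting T0(1) T1(1)] transversals_differ[OF setting T0(1) T2(1)]
      transversals_differ[OF setting T1(1) T2(1)] a0 b B(2) T0 T1 T2 by auto
  then have C: "distinct [v, c0, c1, c2]" and D: "distinct [v, d0, d1, d2]"
    using T0 T1 T2 by auto
  have "C = {v, c0, c1, c2}" "D = {v, d0, d1, d2}"
    using center(3,4) T0 T1 T2 C D
    by (intro line_eq_four_points[OF lines(3)] line_eq_four_points[OF lines(4)]; auto)+
  with T0 T1 T2 C D show thesis
    using that by blast
qed

lemma obtain_second_transversal: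
  assumes lines: "A \<in> F" "B \<in> F" "C \<in> F" "D \<in> F" "distinct [A, B, C, D]"
    and center: "v \<in> A" "v \<in> B" "v \<in> C" "v \<in> D"
    and T: "{a0, b0, c0, d0} \<in> F"
    and pts: "a0 \<in> A - {v}" "b0 \<in> B - {v}" "c0 \<in> C - {v}" "c1 \<in> C - {v}" "d0 \<in> D - {v}" "c0 \<noteq> c1"
  obtains M a1 where "M \<in> F" "{a1, b0, c1} \<subseteq> M" "a1 \<in> A - {v}" "a1 \<noteq> a0"
proof -
  have "b0 \<in> \<Union>F" "c1 \<in> \<Union>F"
    using lines(2,3) pts by blast+
  then obtain M where M: "M \<in> F" "b0 \<in> M" "c1 \<in> M"
    using join by blast
  have "v \<notin> M"
  proof
    assume "v \<in> M"
    then have "M = B"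
      using M lines(2) center(2) pts by (intro line_eqI[of M B v b0]) auto
    then show False
      using off_center_neq[OF lines(2,3) _ center(2,3), of c1 c1] M(3) pts lines(5) by auto
  qed
  then have "M \<noteq> A"
    using center(1) by blast
  then obtain a1 where a1: "M \<inter> A = {a1}"
    using Int_lines_singleton[OF M(1) lines(1)] by blast
  have "a1 \<noteq> a0"
  proof
    assume "a1 = a0"
    then have "M = {a0, b0, c0, d0}"
      using M a1 T pts off_center_neq[OF lines(1,2) _ center(1,2), of a0 b0] lines(5)
      by (intro line_eqI[of M _ a0 b0]) auto
    then show False
      using M(3) pts off_center_neq[of A C v a0 c1] off_center_neq[of B C v b0 c1]
        off_center_neq[of C D v c1 d0] lines center by auto
  qed
  moreover have "a1 \<in> A - {v}"
    using a1 \<open>v \<notin> M\<close> by auto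
  ultimately show thesis
    using that M a1 by blast
qed

lemma obtain_L3_frame:
  assumes lines: "A \<in> F" "B \<in> F" "C \<in> F" "D \<in> F" "distinct [A, B, C, D]"
    and center: "v \<in> A" "v \<in> B" "v \<in> C" "v \<in> D"
  obtains p M where "inj_on p {..<13}" "(`) p ` L3_frame \<subseteq> F" "M \<in> F" "p ` {1, 2, 4} \<subseteq> M"
proof -
  obtain a0 a a' where "A = {v, a0, a, a'}" "distinct [v, a0, a, a']"
    by (rule obtain_line_points[OF lines(1) center(1)])
  then have a0: "a0 \<in> A - {v}"
    by auto
  obtain b0 b1 b2 where B: "B = {v, b0, b1, b2}" "distinct [v, b0, b1, b2]"
    by (rule obtain_line_points[OF lines(2) center(2)])
  obtain c0 c1 c2 d0 d1 d2 where T: "{a0, b0, c0, d0} \<in> F" "{a0, b1, c1, d1} \<in> F" "{a0, b2, c2, d2} \<in> F"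
    and C: "C = {v, c0, c1, c2}" "distinct [v, c0, c1, c2]"
    and D: "D = {v, d0, d1, d2}" "distinct [v, d0, d1, d2]"
    by (rule transversals_from_point[OF lines center a0 B])
  have "b0 \<in> B - {v}" "c0 \<in> C - {v}" "c1 \<in> C - {v}" "d0 \<in> D - {v}" "c0 \<noteq> c1"
    using B C D by auto
  then obtain M a1 where M: "M \<in> F" "{a1, b0, c1} \<subseteq> M" and a1: "a1 \<in> A - {v}" "a1 \<noteq> a0"
    by (rule obtain_second_transversal[OF lines center T(1) a0])
  then have "{v, a0, a1} \<subseteq> A" "distinct [v, a0, a1]"
    using a0 center(1) by auto
  then obtain a2 where A: "A = {v, a0, a1, a2}" "distinct [v, a0, a1, a2]"
    by (rule obtain_fourth_point[OF lines(1)])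
  have disj: "(A - {v}) \<inter> (B - {v}) = {}" "(A - {v}) \<inter> (C - {v}) = {}" "(A - {v}) \<inter> (D - {v}) = {}"
    "(B - {v}) \<inter> (C - {v}) = {}" "(B - {v}) \<inter> (D - {v}) = {}" "(C - {v}) \<inter> (D - {v}) = {}"
    using pencil_disjoint[OF lines(1,2) _ center(1,2)] pencil_disjoint[OF lines(1,3) _ center(1,3)]
      pencil_disjoint[OF lines(1,4) _ center(1,4)] pencil_disjoint[OF lines(2,3) _ center(2,3)]
      pencil_disjoint[OF lines(2,4) _ center(2,4)] pencil_disjoint[OF lines(3,4) _ center(3,4)] lines(5)
    by simp_all
  define p where "p = (!) [a0, a1, b0, v, c1, b1, c2, d1, d0, a2, d2, b2, c0]"
  show thesis
  proof (rule that)
    have "distinct [a0, a1, b0, v, c1, b1, c2, d1, d0, a2, d2, b2, c0]"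
      using A(2) B(2) C(2) D(2) disj unfolding A(1) B(1) C(1) D(1) by auto
    then show "inj_on p {..<13}"
      unfolding p_def by (rule inj_on_nth) simp
    show "(`) p ` L3_frame \<subseteq> F"
      using lines T unfolding A(1) B(1) C(1) D(1)
      by (simp add: p_def L3_frame_def insert_commute)
    show "p ` {1, 2, 4} \<subseteq> M"
      using M by (simp add: p_def)
  qed (fact M(1))
qed

end

lemma more_lines_if_gamma3:
  assumes "lines4 F" "\<forall>A\<in>F. A \<subseteq> {1..n}" "3 \<le> gamma3 n F" "L \<in> F" "x \<in> L"
  shows "3 \<le> card {M \<in> F. x \<in> M \<and> M \<noteq> L}"
proof -
  interpret lines4 F
    by (fact assms(1))
  have "L - {x} \<subseteq> {1..n}"
    using assms(2,4) by blast
  moreover have "card (L - {x}) = 3"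
    using assms(4,5) card_line[OF assms(4)] by (simp add: finite_line)
  ultimately have "gamma3 n F \<le> card (avoid F (L - {x}))"
    by (rule gamma3_le_card_avoid)
  with assms(3) have "3 \<le> card (avoid F (L - {x}))"
    by simp
  then show ?thesis
    unfolding avoid_def lines_avoiding_line_minus_point[OF assms(4,5)] .
qed

theorem lemma4p7:
  fixes n :: nat and F :: "nat set set"
  assumes "3 \<le> n"
    and "\<forall>A\<in>F. A \<subseteq> {1..n} \<and> card A = 4"
    and "gamma3 n F \<ge> 3"
    and "\<forall>A\<in>F. \<forall>B\<in>F. A \<noteq> B \<longrightarrow> card (A \<inter> B) = 1"
  shows "isomorphic F L3"
proof -
  have lines4: "lines4 F"
    using assms(2,4) by unfold_locales auto
  have ground: "\<forall>A\<in>F. A \<subseteq> {1..n}"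
    using assms(2) by blast
  note more_lines = more_lines_if_gamma3[OF lines4 ground assms(3)]
  interpret plane4 F
    by (rule lines4.plane4_if_three_more_lines[OF lines4 more_lines])
  have "avoid F {1, 2, 3} \<noteq> {}"
    using gamma3_le_card_avoid[of "{1, 2, 3}" n F] assms(1,3) by auto
  then obtain A where A: "A \<in> F"
    by (auto simp: avoid_def)
  obtain v where v: "v \<in> A"
    using card_line[OF A] by fastforce
  obtain P where P: "P \<subseteq> {M \<in> F. v \<in> M \<and> M \<noteq> A}" "card P = 3"
    using obtain_subset_with_card_n[OF more_lines[OF A v]] by blast
  then obtain B C D where "P = {B, C, D}" "B \<noteq> C" "B \<noteq> D" "C \<noteq> D"
    unfolding card_3_iff by blast
  with P(1) have lines: "B \<in> F" "C \<in> F" "D \<in> F" "distinct [A, B, C, D]" "v \<in> B" "v \<in> C" "v \<in> D"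
    by auto
  obtain p M where p: "inj_on p {..<13}" "(`) p ` L3_frame \<subseteq> F" "M \<in> F" "p ` {1, 2, 4} \<subseteq> M"
    by (rule obtain_L3_frame[OF A lines(1-4) v lines(5-7)])
  then have "F = (`) p ` L3"
    by (rule eq_image_L3)
  moreover have "isomorphic ((`) p ` L3) L3"
    using p(1) by (intro isomorphic_image) (simp add: Union_L3)
  ultimately show ?thesis
    by simp
qed

end
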